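(* Let $p$ be a prime number and let $a$ be an integer not divisible by $p$. Then for every positive integer $n$, $$\vartheta_p\left(\sum_{k=1}^{n}\left(\frac{1}{a^k}+\frac{1}{(p-a)^k}\right)\frac{p^k}{k}\right) \geq (n+1) - \log_p\left(\frac{n+1}{2}\right).$$ Moreover, this inequality is an equality if and only if $n = 2p^{\alpha}-1$ for some non-negative integer $\alpha$.
   Context: For a prime $p$ and a nonzero rational $r$, $\vartheta_p(r)$ denotes the $p$-adic valuation of $r$. For a positive real $x$, $\log_p(x) = \frac{\log x}{\log p}$ is the logarithm to base $p$. *)

theory Defs
  imports Complex_Main "HOL-Computational_Algebra.Primes" "HOL-Library.Extended_Real"
begin

definition padic_val_rat :: "nat \<Rightarrow> rat \<Rightarrow> ereal" where
  "padic_val_rat p r =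
     (if r = 0 then \<infinity>
      else (case quotient_of r of (a, b) \<Rightarrow>
              ereal (real_of_int (int (multiplicity (int p) a) - int (multiplicity (int p) b)))))"

end

theory Submission
  imports Defs "HOL-Computational_Algebra.Squarefree"
begin

text \<open>
  Put b = p - a. The numbers x = p/a and y = p/b satisfy x + y = x y = z with z = p^2/(a b),
  so S is the sum of the first n terms of -log((1 - x t)(1 - y t)) = -log(1 - z t (1 - t))
  at t = 1. Expanding in powers of z gives S = sum_j (-1)^(n-j) C(j-1, n-j) z^j / j. The j-th
  term vanishes unless 2j >= n + 1, and then its p-adic valuation is at least
  2j - v_p(j) >= 2j - log_p j >= (n + 1) - log_p((n + 1)/2), with equality throughout only for
  2j = n + 1 and j = p^alpha. As at most one term attains the bound, the ultrametric inequality
  gives the bound for S and shows that it is attained exactly when n = 2 p^alpha - 1.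
\<close>

section \<open>Power sums of the roots of t^2 - z t + z\<close>

text \<open>For 0 < j this is the coefficient (j + k)/j * C(j, k) of Waring's formula, written without
  division; its value at j = 0 is never used.\<close>
definition waring_coeff :: "nat \<Rightarrow> nat \<Rightarrow> nat" where
  "waring_coeff j k = (if k = 0 then 1 else (j choose k) + (j - 1 choose (k - 1)))"

lemma waring_coeff_Suc_Suc:
  "0 < j \<Longrightarrow> waring_coeff (Suc j) (Suc k) = waring_coeff j (Suc k) + waring_coeff j k"
  by (cases k) (auto simp: waring_coeff_def gr0_conv_Suc)

lemma waring_coeff_absorb: "0 < j \<Longrightarrow> j * waring_coeff j k = (j + k) * (j choose k)"
proof (cases k)
  case (Suc i)
  then show ?thesis using binomial_absorption[of i j] by (simp add: waring_coeff_def algebra_simps)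
qed (simp add: waring_coeff_def)

definition waring_sum :: "'a :: comm_ring_1 \<Rightarrow> nat \<Rightarrow> 'a" where
  "waring_sum z n = (\<Sum>j=1..n. (-1) ^ (n - j) * of_nat (waring_coeff j (n - j)) * z ^ j)"

lemma waring_sum_Suc_Suc:
  assumes "0 < n"
  shows "waring_sum z (Suc (Suc n)) = z * waring_sum z (Suc n) - z * waring_sum z n"
proof -
  define c where "c m j = (-1) ^ (m - j) * of_nat (waring_coeff j (m - j)) * z ^ j" for m j
  have W: "waring_sum z m = sum (c m) {1..m}" for m
    by (simp add: waring_sum_def c_def)
  have step: "c (Suc (Suc n)) (Suc i) = z * c (Suc n) i - z * c n i" if "i \<in> {1..n}" for i
  proof -
    from that have "Suc n - i = Suc (n - i)" "0 < i" by auto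
    then show ?thesis by (simp add: c_def waring_coeff_Suc_Suc algebra_simps)
  qed
  have "c (Suc (Suc n)) 1 = 0"
    using assms by (simp add: c_def waring_coeff_def binomial_eq_0)
  then have "waring_sum z (Suc (Suc n)) = sum (c (Suc (Suc n))) {Suc 1..Suc (Suc n)}"
    unfolding W by (subst sum.atLeast_Suc_atMost) simp_all
  also have "\<dots> = (\<Sum>i=1..Suc n. c (Suc (Suc n)) (Suc i))"
    by (rule sum.shift_bounds_cl_Suc_ivl)
  also have "\<dots> = (\<Sum>i=1..n. z * c (Suc n) i - z * c n i) + z * c (Suc n) (Suc n)"
    using step by (simp add: c_def waring_coeff_def)
  also have "\<dots> = z * waring_sum z (Suc n) - z * waring_sum z n"
    unfolding W by (simp add: sum_subtractf sum_distrib_left algebra_simps)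
  finally show ?thesis .
qed

lemma power_sum_eq_waring_sum:
  fixes x y z :: "'a :: comm_ring_1"
  assumes sum: "x + y = z" and prod: "x * y = z" and "0 < n"
  shows "x ^ n + y ^ n = waring_sum z n"
proof -
  have "x ^ Suc m + y ^ Suc m = waring_sum z (Suc m)
        \<and> x ^ Suc (Suc m) + y ^ Suc (Suc m) = waring_sum z (Suc (Suc m))" for m
  proof (induction m)
    case 0
    have "x ^ 2 + y ^ 2 = (x + y) ^ 2 - 2 * (x * y)" by (simp add: power2_eq_square algebra_simps)
    then show ?case
      by (simp add: sum prod waring_sum_def waring_coeff_def power2_eq_square numeral_2_eq_2)
  next
    case (Suc m)
    have "x ^ Suc (Suc (Suc m)) + y ^ Suc (Suc (Suc m))
          = (x + y) * (x ^ Suc (Suc m) + y ^ Suc (Suc m)) - x * y * (x ^ Suc m + y ^ Suc m)"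
      by (simp add: algebra_simps)
    with Suc show ?case by (simp add: sum prod waring_sum_Suc_Suc)
  qed
  with \<open>0 < n\<close> show ?thesis by (cases n) auto
qed

lemma waring_sum_div:
  fixes z :: "'a :: field_char_0"
  assumes "0 < n"
  shows "waring_sum z n / of_nat n = (\<Sum>j=1..n. (-1) ^ (n - j) * of_nat (j choose (n - j)) * z ^ j / of_nat j)"
  unfolding waring_sum_def sum_divide_distrib
proof (rule sum.cong)
  fix j assume "j \<in> {1..n}"
  then have "0 < j" "j + (n - j) = n" by auto
  then have "of_nat j * of_nat (waring_coeff j (n - j)) = (of_nat n * of_nat (j choose (n - j)) :: 'a)"
    using waring_coeff_absorb[of j "n - j"] by (metis of_nat_mult)
  with \<open>0 < j\<close> assms
  have coeff: "of_nat (waring_coeff j (n - j)) / of_nat n = (of_nat (j choose (n - j)) / of_nat j :: 'a)"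
    by (simp add: frac_eq_eq mult.commute)
  have "(-1) ^ (n - j) * of_nat (waring_coeff j (n - j)) * z ^ j / of_nat n
        = (-1) ^ (n - j) * z ^ j * (of_nat (waring_coeff j (n - j)) / of_nat n)"
    by simp
  also have "\<dots> = (-1) ^ (n - j) * of_nat (j choose (n - j)) * z ^ j / of_nat j"
    unfolding coeff by simp
  finally show "(-1) ^ (n - j) * of_nat (waring_coeff j (n - j)) * z ^ j / of_nat n
                = (-1) ^ (n - j) * of_nat (j choose (n - j)) * z ^ j / of_nat j" .
qed simp

text \<open>The j-th term of the truncation to degree n of
  -log(1 - z t (1 - t)) = sum_j (z t (1 - t))^j / j, evaluated at t = 1.\<close>
definition log_sum_term :: "nat \<Rightarrow> 'a :: field_char_0 \<Rightarrow> nat \<Rightarrow> 'a" where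
  "log_sum_term n z j = (-1) ^ (n - j) * of_nat (j - 1 choose (n - j)) * z ^ j / of_nat j"

lemma alternating_binomial_sum_Suc:
  fixes f :: "nat \<Rightarrow> 'a :: comm_ring_1"
  shows "(\<Sum>j=1..Suc n. (-1) ^ (Suc n - j) * of_nat (j - 1 choose (Suc n - j)) * f j)
         = (\<Sum>j=1..n. (-1) ^ (n - j) * of_nat (j - 1 choose (n - j)) * f j)
           + (\<Sum>j=1..Suc n. (-1) ^ (Suc n - j) * of_nat (j choose (Suc n - j)) * f j)"
proof -
  have "(\<Sum>j=1..n. (-1) ^ (Suc n - j) * of_nat (j - 1 choose (Suc n - j)) * f j)
        = (\<Sum>j=1..n. (-1) ^ (n - j) * of_nat (j - 1 choose (n - j)) * f j
                      + (-1) ^ (Suc n - j) * of_nat (j choose (Suc n - j)) * f j)"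
  proof (rule sum.cong)
    fix j assume "j \<in> {1..n}"
    then obtain i where "j = Suc i" "Suc n - j = Suc (n - j)" by (cases j) auto
    then show "(-1) ^ (Suc n - j) * of_nat (j - 1 choose (Suc n - j)) * f j
        = (-1) ^ (n - j) * of_nat (j - 1 choose (n - j)) * f j
          + (-1) ^ (Suc n - j) * of_nat (j choose (Suc n - j)) * f j"
      by (simp add: algebra_simps)
  qed simp
  then show ?thesis by (simp add: sum.distrib)
qed

lemma sum_power_sums_div_eq_log_sum:
  fixes x y z :: "'a :: field_char_0"
  assumes "x + y = z" and "x * y = z"
  shows "(\<Sum>k=1..n. (x ^ k + y ^ k) / of_nat k) = (\<Sum>j=1..n. log_sum_term n z j)"
proof (induction n)
  case (Suc n)
  have "(\<Sum>k=1..Suc n. (x ^ k + y ^ k) / of_nat k)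
        = (\<Sum>j=1..n. log_sum_term n z j) + waring_sum z (Suc n) / of_nat (Suc n)"
    using Suc power_sum_eq_waring_sum[OF assms zero_less_Suc] by simp
  also have "\<dots> = (\<Sum>j=1..Suc n. log_sum_term (Suc n) z j)"
    using alternating_binomial_sum_Suc[of n "\<lambda>j. z ^ j / of_nat j"]
    unfolding waring_sum_div[OF zero_less_Suc] log_sum_term_def
    by (simp del: sum.cl_ivl_Suc)
  finally show ?case .
qed (simp add: log_sum_term_def)

lemma sum_inverse_powers_eq_log_sum:
  fixes a b P :: "'a :: field_char_0"
  assumes "a \<noteq> 0" and "b \<noteq> 0" and "a + b = P"
  shows "(\<Sum>k=1..n. (1 / a ^ k + 1 / b ^ k) * P ^ k / of_nat k)
         = (\<Sum>j=1..n. log_sum_term n (P ^ 2 / (a * b)) j)"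
proof -
  have "P * a + P * b = P * P" by (metis distrib_left assms(3))
  then have "P / a + P / b = P ^ 2 / (a * b)" and "P / a * (P / b) = P ^ 2 / (a * b)"
    using assms by (simp_all add: field_simps power2_eq_square)
  then have "(\<Sum>k=1..n. ((P / a) ^ k + (P / b) ^ k) / of_nat k)
             = (\<Sum>j=1..n. log_sum_term n (P ^ 2 / (a * b)) j)"
    by (rule sum_power_sums_div_eq_log_sum)
  then show ?thesis by (simp add: power_divide distrib_right)
qed

section \<open>Ultrametric inequality for the p-adic valuation on \<rat>\<close>

lemma multiplicity_add_ge:
  fixes x y :: "'a :: factorial_semiring"
  assumes "x + y \<noteq> 0" and "\<not> is_unit p"
  shows "min (multiplicity p x) (multiplicity p y) \<le> multiplicity p (x + y)"
proof (rule multiplicity_geI[OF assms])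
  show "p ^ min (multiplicity p x) (multiplicity p y) dvd x + y"
    by (intro dvd_add multiplicity_dvd') simp_all
qed

lemma padic_val_rat_zero [simp]: "padic_val_rat p 0 = \<infinity>"
  by (simp add: padic_val_rat_def)

lemma padic_val_rat_of_int_div:
  fixes N M :: int
  assumes "prime p" and "N \<noteq> 0" and "M \<noteq> 0"
  shows "padic_val_rat p (of_int N / of_int M) =
         ereal (real (multiplicity (int p) N) - real (multiplicity (int p) M))"
proof -
  define r where "r = (of_int N / of_int M :: rat)"
  obtain A B where AB: "quotient_of r = (A, B)" by (cases "quotient_of r")
  have "r = of_int A / of_int B" "B > 0" using quotient_of_div[OF AB] quotient_of_denom_pos[OF AB] by auto
  moreover have "r \<noteq> 0" using assms by (simp add: r_def)
  ultimately have "A \<noteq> 0" and "A * M = N * B"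
    using assms by (auto simp: r_def frac_eq_eq simp flip: of_int_mult)
  then have "multiplicity (int p) (A * M) = multiplicity (int p) (N * B)" by simp
  then have "multiplicity (int p) A + multiplicity (int p) M = multiplicity (int p) N + multiplicity (int p) B"
    using assms \<open>A \<noteq> 0\<close> \<open>B > 0\<close> by (simp add: prime_elem_multiplicity_mult_distrib)
  with \<open>r \<noteq> 0\<close> AB show ?thesis
    unfolding padic_val_rat_def r_def[symmetric] by simp
qed

lemma rat_as_int_fraction:
  fixes r :: rat
  obtains A B :: int where "r = of_int A / of_int B" and "B \<noteq> 0"
proof -
  obtain A B where q: "quotient_of r = (A, B)" by (cases "quotient_of r")
  show thesis by (rule that[OF quotient_of_div[OF q]]) (use quotient_of_denom_pos[OF q] in simp)
qed

lemma padic_val_rat_uminus [simp]: "padic_val_rat p (- r) = padic_val_rat p r"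
proof -
  obtain A B where q: "quotient_of r = (A, B)" by (cases "quotient_of r")
  then have "quotient_of (- r) = (- A, B)" by (simp add: rat_uminus_code)
  with q show ?thesis by (simp add: padic_val_rat_def)
qed

lemma padic_val_rat_neg_one_power_mult [simp]:
  "padic_val_rat p ((-1) ^ k * r) = padic_val_rat p r"
  by (cases "even k") simp_all

lemma padic_val_rat_add_ge:
  assumes "prime p"
  shows "min (padic_val_rat p r) (padic_val_rat p s) \<le> padic_val_rat p (r + s)"
proof (cases "r = 0 \<or> s = 0 \<or> r + s = 0")
  case False
  obtain A B where r: "r = of_int A / of_int B" and "B \<noteq> 0" by (rule rat_as_int_fraction)
  obtain C D where s: "s = of_int C / of_int D" and "D \<noteq> 0" by (rule rat_as_int_fraction)
  have "A \<noteq> 0" "C \<noteq> 0" using False r s by auto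
  have rs: "r + s = of_int (A * D + C * B) / of_int (B * D)"
    using \<open>B \<noteq> 0\<close> \<open>D \<noteq> 0\<close> by (simp add: r s field_simps)
  with False have "A * D + C * B \<noteq> 0" by (metis div_0 of_int_0)
  define m where "m = multiplicity (int p)"
  have m_mult: "m (x * y) = m x + m y" if "x \<noteq> 0" "y \<noteq> 0" for x y
    unfolding m_def using assms that by (simp add: prime_elem_multiplicity_mult_distrib)
  have "min (m (A * D)) (m (C * B)) \<le> m (A * D + C * B)"
    unfolding m_def using assms \<open>A * D + C * B \<noteq> 0\<close> by (intro multiplicity_add_ge) auto
  then have "m A + m D \<le> m (A * D + C * B) \<or> m C + m B \<le> m (A * D + C * B)"
    using \<open>A \<noteq> 0\<close> \<open>B \<noteq> 0\<close> \<open>C \<noteq> 0\<close> \<open>D \<noteq> 0\<close> by (simp add: m_mult min_le_iff_disj)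
  moreover have "padic_val_rat p r = ereal (real (m A) - real (m B))"
    using assms \<open>A \<noteq> 0\<close> \<open>B \<noteq> 0\<close> by (simp add: r padic_val_rat_of_int_div m_def)
  moreover have "padic_val_rat p s = ereal (real (m C) - real (m D))"
    using assms \<open>C \<noteq> 0\<close> \<open>D \<noteq> 0\<close> by (simp add: s padic_val_rat_of_int_div m_def)
  moreover have "padic_val_rat p (r + s) = ereal (real (m (A * D + C * B)) - real (m (B * D)))"
    using padic_val_rat_of_int_div[OF assms \<open>A * D + C * B \<noteq> 0\<close>, of "B * D"] \<open>B \<noteq> 0\<close> \<open>D \<noteq> 0\<close>
    unfolding rs m_def by simp
  ultimately show ?thesis
    using \<open>B \<noteq> 0\<close> \<open>D \<noteq> 0\<close> by (auto simp: m_mult min_le_iff_disj)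
next
  case True
  then consider "r = 0" | "s = 0" | "r + s = 0" by blast
  then show ?thesis
  proof cases
    case 3
    then show ?thesis by (simp only: padic_val_rat_zero ereal_less_eq(1))
  qed simp_all
qed

lemma padic_val_rat_add_eq_left:
  assumes "prime p" and less: "padic_val_rat p r < padic_val_rat p s"
  shows "padic_val_rat p (r + s) = padic_val_rat p r"
proof (rule antisym)
  have "min (padic_val_rat p (r + s)) (padic_val_rat p (- s)) \<le> padic_val_rat p r"
    using padic_val_rat_add_ge[OF assms(1), of "r + s" "- s"] by simp
  with less show "padic_val_rat p (r + s) \<le> padic_val_rat p r"
    by (auto simp: min_le_iff_disj)
  show "padic_val_rat p r \<le> padic_val_rat p (r + s)"
    using padic_val_rat_add_ge[OF assms(1), of r s] less by simp
qed

lemma padic_val_rat_sum_ge: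
  assumes "prime p" and "\<And>j. j \<in> A \<Longrightarrow> c \<le> padic_val_rat p (f j)"
  shows "c \<le> padic_val_rat p (\<Sum>j\<in>A. f j)"
  using assms(2)
proof (induction A rule: infinite_finite_induct)
  case (insert j A)
  then have "c \<le> min (padic_val_rat p (f j)) (padic_val_rat p (\<Sum>j\<in>A. f j))" by simp
  also have "\<dots> \<le> padic_val_rat p (f j + (\<Sum>j\<in>A. f j))" by (rule padic_val_rat_add_ge[OF assms(1)])
  finally show ?case using insert by simp
qed simp_all

lemma padic_val_rat_sum_gt:
  assumes "prime p" and "\<And>j. j \<in> A \<Longrightarrow> ereal c < padic_val_rat p (f j)"
  shows "ereal c < padic_val_rat p (\<Sum>j\<in>A. f j)"
  using assms(2)
proof (induction A rule: infinite_finite_induct)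
  case (insert j A)
  then have "ereal c < min (padic_val_rat p (f j)) (padic_val_rat p (\<Sum>j\<in>A. f j))" by simp
  also have "\<dots> \<le> padic_val_rat p (f j + (\<Sum>j\<in>A. f j))" by (rule padic_val_rat_add_ge[OF assms(1)])
  finally show ?case using insert by simp
qed simp_all

lemma padic_val_rat_sum_eq_iff:
  assumes "prime p" and "finite A"
    and ge: "\<And>j. j \<in> A \<Longrightarrow> ereal c \<le> padic_val_rat p (f j)"
    and unique: "\<And>i j. i \<in> A \<Longrightarrow> j \<in> A \<Longrightarrow> padic_val_rat p (f i) = ereal c
                   \<Longrightarrow> padic_val_rat p (f j) = ereal c \<Longrightarrow> i = j"
  shows "padic_val_rat p (\<Sum>j\<in>A. f j) = ereal c \<longleftrightarrow> (\<exists>j\<in>A. padic_val_rat p (f j) = ereal c)"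
proof
  assume val: "padic_val_rat p (\<Sum>j\<in>A. f j) = ereal c"
  show "\<exists>j\<in>A. padic_val_rat p (f j) = ereal c"
  proof (rule ccontr)
    assume "\<not> ?thesis"
    with ge have "ereal c < padic_val_rat p (f j)" if "j \<in> A" for j
      using that by (metis order_le_imp_less_or_eq)
    with val show False using padic_val_rat_sum_gt[OF assms(1)] by (metis less_irrefl)
  qed
next
  assume "\<exists>j\<in>A. padic_val_rat p (f j) = ereal c"
  then obtain i where i: "i \<in> A" "padic_val_rat p (f i) = ereal c" by blast
  have "ereal c < padic_val_rat p (f j)" if "j \<in> A - {i}" for j
    using ge[of j] unique[of i j] i that by (metis Diff_iff insertI1 order_le_imp_less_or_eq)
  then have "padic_val_rat p (f i) < padic_val_rat p (\<Sum>j\<in>A - {i}. f j)"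
    unfolding i(2) by (rule padic_val_rat_sum_gt[OF assms(1)])
  then show "padic_val_rat p (\<Sum>j\<in>A. f j) = ereal c"
    using i \<open>finite A\<close> by (simp add: sum.remove padic_val_rat_add_eq_left[OF assms(1)])
qed

section \<open>Valuations of the terms\<close>

lemma one_plus_div_le_power:
  fixes p N m :: nat
  assumes p: "2 \<le> p" and N: "2 \<le> N"
  shows "1 + real m / real N \<le> real p ^ m"
    and "0 < m \<Longrightarrow> 1 + real m / real N < real p ^ m"
proof -
  have "1 + m \<le> 2 ^ m" using less_exp[of m] by (simp add: Suc_le_eq)
  also have "(2 :: nat) ^ m \<le> p ^ m" using p by (rule power_mono) simp
  finally have pow: "1 + real m \<le> real p ^ m" by (metis of_nat_1 of_nat_add of_nat_le_iff of_nat_power)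
  have "real m / real N \<le> real m" using N by (simp add: divide_le_eq mult_le_cancel_left1)
  with pow show "1 + real m / real N \<le> real p ^ m" by linarith
  assume "0 < m"
  with N have "real m / real N < real m" by (simp add: divide_less_eq mult_less_cancel_left1)
  with pow show "1 + real m / real N < real p ^ m" by linarith
qed

lemma sub_log_half_le:
  fixes p n j v :: nat
  assumes p: "2 \<le> p" and n: "1 \<le> n" and j: "n + 1 \<le> 2 * j" and v: "p ^ v \<le> j"
  shows "real (n + 1) - log p (real (n + 1) / 2) \<le> real (2 * j) - real v"
    and "real (2 * j) - real v = real (n + 1) - log p (real (n + 1) / 2) \<Longrightarrow> n + 1 = 2 * j \<and> j = p ^ v"
proof -
  define N m where "N = n + 1" and "m = 2 * j - N"
  have N: "2 \<le> N" and jNm: "real (2 * j) = real N + real m" using n j by (simp_all add: N_def m_def)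
  have p1: "1 < real p" using p by simp
  have pos: "0 < 1 + real m / real N" by (simp add: add_pos_nonneg)
  have j_eq: "real j = real N / 2 * (1 + real m / real N)" using jNm N by (simp add: field_simps)
  have log_j: "log p j = log p (real N / 2) + log p (1 + real m / real N)"
    unfolding j_eq using N pos by (intro log_mult_pos) simp_all
  have log_p_m: "log p (real p ^ m) = real m" using p1 by (simp add: log_pow_cancel)
  have ratio: "log p (1 + real m / real N) \<le> real m"
    using log_mono[OF p1 pos one_plus_div_le_power(1)[OF p N]] log_p_m by simp
  have ratio_strict: "log p (1 + real m / real N) < real m" if "0 < m"
    using log_less[OF p1 pos one_plus_div_le_power(2)[OF p N that]] log_p_m by simp
  have "real (p ^ v) \<le> real j" using v by (simp only: of_nat_le_iff)
  then have "log p (real p ^ v) \<le> log p j"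
    using p1 by (intro log_mono) simp_all
  then have v_le: "real v \<le> log p j" using p1 by (simp add: log_pow_cancel)
  show "real (n + 1) - log p (real (n + 1) / 2) \<le> real (2 * j) - real v"
    using jNm log_j ratio v_le unfolding N_def by linarith
  assume eq: "real (2 * j) - real v = real (n + 1) - log p (real (n + 1) / 2)"
  have m0: "m = 0"
  proof (rule ccontr)
    assume "m \<noteq> 0"
    with ratio_strict have "log p (1 + real m / real N) < real m" by simp
    with eq jNm log_j v_le show False unfolding N_def by linarith
  qed
  have "log p j = real v"
    using eq jNm log_j ratio v_le unfolding N_def by linarith
  have "0 < j" using j by simp
  then have "real j = real p powr log p j" using p1 by simp
  also have "\<dots> = real p ^ v" using p1 by (simp add: \<open>log p j = real v\<close> powr_realpow)
  finally have "j = p ^ v" by (simp flip: of_nat_power)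
  with m0 j show "n + 1 = 2 * j \<and> j = p ^ v" by (simp add: m_def N_def)
qed

lemma padic_val_rat_log_sum_term:
  fixes p :: nat and Q :: int
  assumes p: "prime p" and Q: "\<not> int p dvd Q" and "0 < j" and "j - 1 choose (n - j) \<noteq> 0"
  shows "padic_val_rat p (log_sum_term n (of_nat p ^ 2 / of_int Q) j)
         = ereal (real (multiplicity (int p) (int (j - 1 choose (n - j))))
                  + real (2 * j) - real (multiplicity (int p) (int j)))"
proof -
  define C where "C = int (j - 1 choose (n - j))"
  define m where "m = multiplicity (int p)"
  have "Q \<noteq> 0" "int p \<noteq> 0" "C \<noteq> 0" using assms by (auto simp: C_def)
  have pe: "prime_elem (int p)" using p by simp
  have as_fraction: "log_sum_term n (of_nat p ^ 2 / of_int Q) j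
        = (-1) ^ (n - j) * (of_int (C * int p ^ (2 * j)) / of_int (int j * Q ^ j))"
    by (simp add: log_sum_term_def C_def power_divide mult_ac flip: power_mult)
  have "padic_val_rat p (log_sum_term n (of_nat p ^ 2 / of_int Q) j)
        = padic_val_rat p (of_int (C * int p ^ (2 * j)) / of_int (int j * Q ^ j))"
    unfolding as_fraction by (rule padic_val_rat_neg_one_power_mult)
  also have "\<dots> = ereal (real (m (C * int p ^ (2 * j))) - real (m (int j * Q ^ j)))"
    unfolding m_def using \<open>Q \<noteq> 0\<close> \<open>int p \<noteq> 0\<close> \<open>C \<noteq> 0\<close> \<open>0 < j\<close>
    by (intro padic_val_rat_of_int_div[OF p]) simp_all
  also have "m (C * int p ^ (2 * j)) = m C + 2 * j"
    using pe \<open>C \<noteq> 0\<close> \<open>int p \<noteq> 0\<close>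
    by (simp add: m_def prime_elem_multiplicity_mult_distrib multiplicity_prime_power)
  also have "m (int j * Q ^ j) = m (int j)"
    using pe \<open>Q \<noteq> 0\<close> \<open>0 < j\<close> Q
    by (simp add: m_def prime_elem_multiplicity_mult_distrib prime_elem_multiplicity_power_distrib
        not_dvd_imp_multiplicity_0)
  finally show ?thesis by (simp add: m_def C_def)
qed

lemma padic_val_rat_log_sum_term_ge:
  fixes p n j :: nat and Q :: int
  assumes p: "prime p" and Q: "\<not> int p dvd Q" and j: "j \<in> {1..n}"
  defines "B \<equiv> real (n + 1) - log p (real (n + 1) / 2)"
  shows "ereal B \<le> padic_val_rat p (log_sum_term n (of_nat p ^ 2 / of_int Q) j)"
    and "padic_val_rat p (log_sum_term n (of_nat p ^ 2 / of_int Q) j) = ereal B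
         \<Longrightarrow> n + 1 = 2 * j \<and> j = p ^ multiplicity (int p) (int j)"
proof -
  define t :: rat where "t = log_sum_term n (of_nat p ^ 2 / of_int Q) j"
  define v where "v = multiplicity (int p) (int j)"
  have "ereal B \<le> padic_val_rat p t \<and> (padic_val_rat p t = ereal B \<longrightarrow> n + 1 = 2 * j \<and> j = p ^ v)"
  proof (cases "j - 1 choose (n - j) = 0")
    case True
    then have "t = 0" unfolding t_def log_sum_term_def by simp
    then show ?thesis by simp
  next
    case False
    moreover have "1 \<le> j" "j \<le> n" using j by simp_all
    ultimately have "n + 1 \<le> 2 * j" unfolding binomial_eq_0_iff by arith
    have "int (p ^ v) dvd int j" unfolding v_def of_nat_power by (rule multiplicity_dvd)
    then have "p ^ v dvd j" by (simp only: of_nat_dvd_iff)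
    then have "p ^ v \<le> j" using \<open>1 \<le> j\<close> by (simp add: dvd_imp_le)
    have "1 \<le> n" using \<open>1 \<le> j\<close> \<open>j \<le> n\<close> by simp
    note bound = sub_log_half_le[OF prime_ge_2_nat[OF p] this \<open>n + 1 \<le> 2 * j\<close> \<open>p ^ v \<le> j\<close>]
    define c where "c = multiplicity (int p) (int (j - 1 choose (n - j)))"
    have val: "padic_val_rat p t = ereal (real c + real (2 * j) - real v)"
      unfolding t_def v_def c_def using \<open>1 \<le> j\<close> False
      by (intro padic_val_rat_log_sum_term[OF p Q]) simp_all
    have lower: "B \<le> real (2 * j) - real v" using bound(1) unfolding B_def .
    moreover have "real (2 * j) - real v = B" if "real c + real (2 * j) - real v = B"
      using lower that by simp
    ultimately show ?thesis using bound(2) unfolding B_def by (simp add: val)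
  qed
  then show "ereal B \<le> padic_val_rat p t"
    and "padic_val_rat p t = ereal B \<Longrightarrow> n + 1 = 2 * j \<and> j = p ^ v" by simp_all
qed

lemma padic_val_rat_log_sum_term_eq:
  fixes p n :: nat and Q :: int
  assumes p: "prime p" and Q: "\<not> int p dvd Q" and n: "n + 1 = 2 * p ^ \<alpha>"
  shows "padic_val_rat p (log_sum_term n (of_nat p ^ 2 / of_int Q) (p ^ \<alpha>))
         = ereal (real (n + 1) - log p (real (n + 1) / 2))"
proof -
  have "0 < p ^ \<alpha>" using p by (simp add: prime_gt_0_nat)
  with n have "n - p ^ \<alpha> = p ^ \<alpha> - 1" by simp
  moreover have "multiplicity (int p) (int (p ^ \<alpha>)) = \<alpha>"
    using p by (simp add: multiplicity_prime_power)
  ultimately have "padic_val_rat p (log_sum_term n (of_nat p ^ 2 / of_int Q) (p ^ \<alpha>))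
                   = ereal (real (2 * p ^ \<alpha>) - real \<alpha>)"
    using padic_val_rat_log_sum_term[OF p Q \<open>0 < p ^ \<alpha>\<close>, of n] by simp
  also have "1 < real p" using prime_gt_1_nat[OF p] by simp
  then have "real (2 * p ^ \<alpha>) - real \<alpha> = real (n + 1) - log p (real (n + 1) / 2)"
    unfolding n by (simp add: log_pow_cancel)
  finally show ?thesis .
qed

lemma padic_val_rat_log_sum_term_attained_iff:
  fixes p n :: nat and Q :: int
  assumes p: "prime p" and Q: "\<not> int p dvd Q"
  shows "(\<exists>j\<in>{1..n}. padic_val_rat p (log_sum_term n (of_nat p ^ 2 / of_int Q) j)
                      = ereal (real (n + 1) - log p (real (n + 1) / 2)))
         \<longleftrightarrow> (\<exists>\<alpha>. n = 2 * p ^ \<alpha> - 1)"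
proof
  assume "\<exists>j\<in>{1..n}. padic_val_rat p (log_sum_term n (of_nat p ^ 2 / of_int Q) j)
                      = ereal (real (n + 1) - log p (real (n + 1) / 2))"
  then obtain j where "n + 1 = 2 * j" and "j = p ^ multiplicity (int p) (int j)"
    using padic_val_rat_log_sum_term_ge(2)[OF p Q] by blast
  then have "n = 2 * p ^ multiplicity (int p) (int j) - 1" by simp
  then show "\<exists>\<alpha>. n = 2 * p ^ \<alpha> - 1" by blast
next
  assume "\<exists>\<alpha>. n = 2 * p ^ \<alpha> - 1"
  then obtain \<alpha> where "n = 2 * p ^ \<alpha> - 1" by blast
  moreover have "0 < p ^ \<alpha>" using p by (simp add: prime_gt_0_nat)
  ultimately have "n + 1 = 2 * p ^ \<alpha>" by simp
  with \<open>0 < p ^ \<alpha>\<close> show "\<exists>j\<in>{1..n}. padic_val_rat p (log_sum_term n (of_nat p ^ 2 / of_int Q) j)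
                      = ereal (real (n + 1) - log p (real (n + 1) / 2))"
    using padic_val_rat_log_sum_term_eq[OF p Q] by (intro bexI[of _ "p ^ \<alpha>"]) auto
qed

lemma not_dvd_mult_complement:
  fixes p :: nat and a :: int
  assumes "prime p" and "\<not> int p dvd a"
  shows "\<not> int p dvd a * (int p - a)"
proof -
  have "\<not> int p dvd int p - a"
  proof
    assume "int p dvd int p - a"
    then have "int p dvd int p - (int p - a)" by (rule dvd_diff[OF dvd_refl])
    with assms(2) show False by simp
  qed
  with assms show ?thesis by (simp add: prime_dvd_mult_iff)
qed

theorem theorem1:
  fixes p :: nat and a :: int and n :: nat
  assumes "prime p" and "\<not> int p dvd a" and "n \<ge> 1"
  defines "S \<equiv> (\<Sum>k=1..n. (1 / (of_int a) ^ k + 1 / (of_int (int p - a)) ^ k)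
                            * (of_nat p) ^ k / of_nat k :: rat)"
  shows "padic_val_rat p S \<ge> ereal (real (n + 1) - log (real p) (real (n + 1) / 2))
         \<and> (padic_val_rat p S = ereal (real (n + 1) - log (real p) (real (n + 1) / 2))
            \<longleftrightarrow> (\<exists>\<alpha>::nat. n = 2 * p ^ \<alpha> - 1))"
proof -
  note p = \<open>prime p\<close>
  define Q where "Q = a * (int p - a)"
  define t :: "nat \<Rightarrow> rat" where "t = log_sum_term n (of_nat p ^ 2 / of_int Q)"
  define B where "B = real (n + 1) - log (real p) (real (n + 1) / 2)"
  have Q: "\<not> int p dvd Q" unfolding Q_def using assms(1,2) by (rule not_dvd_mult_complement)
  then have "(of_int a :: rat) \<noteq> 0" and "(of_int (int p - a) :: rat) \<noteq> 0"
    by (auto simp: Q_def simp del: of_int_diff)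
  then have S: "S = (\<Sum>j=1..n. t j)"
    unfolding S_def t_def Q_def of_int_mult by (rule sum_inverse_powers_eq_log_sum) simp
  note ge = padic_val_rat_log_sum_term_ge[OF p Q, where n = n, folded t_def B_def]
  have unique: "i = j" if "i \<in> {1..n}" "j \<in> {1..n}"
    "padic_val_rat p (t i) = ereal B" "padic_val_rat p (t j) = ereal B" for i j
    using conjunct1[OF ge(2)[OF that(1,3)]] conjunct1[OF ge(2)[OF that(2,4)]] by simp
  have "ereal B \<le> padic_val_rat p S"
    unfolding S by (rule padic_val_rat_sum_ge[where A = "{1..n}" and f = t, OF p ge(1)])
  moreover have "padic_val_rat p S = ereal B \<longleftrightarrow> (\<exists>j\<in>{1..n}. padic_val_rat p (t j) = ereal B)"
    unfolding S
    by (rule padic_val_rat_sum_eq_iff[where A = "{1..n}" and f = t, OF p finite_atLeastAtMost ge(1) unique])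
  moreover have "\<dots> \<longleftrightarrow> (\<exists>\<alpha>. n = 2 * p ^ \<alpha> - 1)"
    unfolding t_def B_def by (rule padic_val_rat_log_sum_term_attained_iff[OF p Q])
  ultimately show ?thesis unfolding B_def by blast
qed

end
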